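(* Let $V\neq\emptyset$, let $F\colon V\leadsto V$ be a strict undirected multifunction and let $U,W\subset V$ be nonempty. Then $F$ is $(U,W)$-bipartite if and only if $V$ is the disjoint union of $U$ and $W$ and for every $n\in\mathbb{N}=\{0,1,2,\dots\}$ we have $F^{2n}_{-}(U)=U$, $F^{2n}_{-}(W)=W$, $F^{2n+1}_{-}(U)=W$ and $F^{2n+1}_{-}(W)=U$.
   Context: A multifunction $F\colon V\leadsto V$ is a map $F\colon V\to P(V)$; it is strict if $F(v)\neq\emptyset$ for all $v$, and undirected if $u\in F(v)\iff v\in F(u)$ for all $u,v$. For $A\subset V$, $F_{-}(A)=\{x\in V\mid F(x)\cap A\neq\emptyset\}$, and the iterates are $F^{0}_{-}(A)=A$, $F^{n}_{-}(A)=F_{-}(F^{n-1}_{-}(A))$ for $n\ge1$. A set $U\subset V$ is independent if $U\cap F_{-}(U)=\emptyset$. For nonempty $U,W\subset V$, $F$ is $(U,W)$-bipartite if $U,W$ are independent and $V$ is the disjoint union of $U$ and $W$. *)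

theory Defs
  imports Main
begin

definition multifun :: "'a set \<Rightarrow> ('a \<Rightarrow> 'a set) \<Rightarrow> bool" where
  "multifun V F \<longleftrightarrow> (\<forall>v\<in>V. F v \<subseteq> V)"

definition strict_mf :: "'a set \<Rightarrow> ('a \<Rightarrow> 'a set) \<Rightarrow> bool" where
  "strict_mf V F \<longleftrightarrow> (\<forall>v\<in>V. F v \<noteq> {})"

definition undirected_mf :: "'a set \<Rightarrow> ('a \<Rightarrow> 'a set) \<Rightarrow> bool" where
  "undirected_mf V F \<longleftrightarrow> (\<forall>u\<in>V. \<forall>v\<in>V. u \<in> F v \<longleftrightarrow> v \<in> F u)"

definition preimg :: "'a set \<Rightarrow> ('a \<Rightarrow> 'a set) \<Rightarrow> 'a set \<Rightarrow> 'a set" where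
  "preimg V F A = {x \<in> V. F x \<inter> A \<noteq> {}}"

fun preimg_iter :: "'a set \<Rightarrow> ('a \<Rightarrow> 'a set) \<Rightarrow> nat \<Rightarrow> 'a set \<Rightarrow> 'a set" where
  "preimg_iter V F 0 A = A"
| "preimg_iter V F (Suc n) A = preimg V F (preimg_iter V F n A)"

definition independent :: "'a set \<Rightarrow> ('a \<Rightarrow> 'a set) \<Rightarrow> 'a set \<Rightarrow> bool" where
  "independent V F U \<longleftrightarrow> U \<inter> preimg V F U = {}"

definition bipartite :: "'a set \<Rightarrow> ('a \<Rightarrow> 'a set) \<Rightarrow> 'a set \<Rightarrow> 'a set \<Rightarrow> bool" where
  "bipartite V F U W \<longleftrightarrow> independent V F U \<and> independent V F W
     \<and> U \<union> W = V \<and> U \<inter> W = {}"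

end

theory Submission
  imports Defs
begin

text \<open>For a strict multifunction, a partition \<open>V = U \<union> W\<close> is bipartite exactly when
  \<open>F\<^sub>-\<close> swaps the two parts: every point of \<open>W\<close> has a neighbour, which cannot lie in the
  independent set \<open>W\<close> and hence lies in \<open>U\<close>. Iterating the swap gives the parity pattern.\<close>

lemma bipartite_sym: "bipartite V F U W \<Longrightarrow> bipartite V F W U"
  unfolding bipartite_def by blast

lemma bipartite_preimg_eq:
  assumes "multifun V F" "strict_mf V F" "bipartite V F U W"
  shows "preimg V F U = W"
proof
  show "preimg V F U \<subseteq> W"
    using assms(3) unfolding bipartite_def independent_def preimg_def by blast
  show "W \<subseteq> preimg V F U"
  proof
    fix w assume w: "w \<in> W"
    then have wV: "w \<in> V" using assms(3) unfolding bipartite_def by blast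
    have "F w \<noteq> {}" "F w \<subseteq> V"
      using wV assms(1,2) unfolding strict_mf_def multifun_def by blast+
    moreover have "F w \<inter> W = {}"
      using w wV assms(3) unfolding bipartite_def independent_def preimg_def by blast
    ultimately have "F w \<inter> U \<noteq> {}" using assms(3) unfolding bipartite_def by blast
    then show "w \<in> preimg V F U" using wV unfolding preimg_def by blast
  qed
qed

lemma bipartite_iff_preimg_swap:
  assumes "multifun V F" "strict_mf V F"
  shows "bipartite V F U W \<longleftrightarrow>
    U \<union> W = V \<and> U \<inter> W = {} \<and> preimg V F U = W \<and> preimg V F W = U"
  using bipartite_preimg_eq[OF assms] bipartite_sym
  unfolding bipartite_def independent_def by blast

lemma preimg_iter_swap:
  assumes "preimg V F A = B" "preimg V F B = A"
  shows "preimg_iter V F (2*n) A = A" "preimg_iter V F (2*n+1) A = B"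
proof -
  show even: "preimg_iter V F (2*n) A = A"
    by (induction n) (simp_all add: assms)
  show "preimg_iter V F (2*n+1) A = B"
    by (simp add: even assms(1))
qed

theorem lemma4p12:
  fixes V :: "'a set" and F :: "'a \<Rightarrow> 'a set" and U W :: "'a set"
  assumes "V \<noteq> {}" and "multifun V F" and "strict_mf V F" and "undirected_mf V F"
    and "U \<subseteq> V" and "W \<subseteq> V" and "U \<noteq> {}" and "W \<noteq> {}"
  shows "bipartite V F U W \<longleftrightarrow>
    (U \<union> W = V \<and> U \<inter> W = {} \<and>
     (\<forall>n::nat. preimg_iter V F (2*n) U = U \<and> preimg_iter V F (2*n) W = W
       \<and> preimg_iter V F (2*n+1) U = W \<and> preimg_iter V F (2*n+1) W = U))"
proof -
  have "(\<forall>n::nat. preimg_iter V F (2*n) U = U \<and> preimg_iter V F (2*n) W = W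
       \<and> preimg_iter V F (2*n+1) U = W \<and> preimg_iter V F (2*n+1) W = U)
    \<longleftrightarrow> preimg V F U = W \<and> preimg V F W = U"
  proof
    assume "\<forall>n::nat. preimg_iter V F (2*n) U = U \<and> preimg_iter V F (2*n) W = W
       \<and> preimg_iter V F (2*n+1) U = W \<and> preimg_iter V F (2*n+1) W = U"
    then show "preimg V F U = W \<and> preimg V F W = U"
      by (metis preimg_iter.simps One_nat_def add_0 mult_0_right)
  qed (simp add: preimg_iter_swap)
  then show ?thesis
    using bipartite_iff_preimg_swap[OF assms(2,3)] by simp
qed

end
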